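(* Consider the deadline-constrained data aggregation model described in the context, with sink deadline $D$ (a positive integer) and all sensor nodes being sources. Then the maximum value of $QoA$ achievable in an optimal aggregation tree is $2^D-1$, and the maximum value of $QoA$ achievable in the worst-case aggregation tree is $D$.
   Context: A wireless sensor network is a connected graph $\mathcal{G}=(\mathcal{V}\cup\{S\},\xi)$, where $S$ is the sink and $\mathcal{V}$ is the set of sensor nodes. Time is slotted, every transmission takes one slot, and the interference model is one-hop: two transmissions toward the same receiver in the same slot collide. Data aggregation is performed on a spanning tree $\psi$ of $\mathcal{G}$ rooted at $S$ (an aggregation tree). A schedule assigns to each participating sensor node $i$ a waiting time $W_i\in\{0,1,\dots,D-1\}$ (node $i$ transmits its aggregated data to its parent in slot $W_i$), and $W_S=D$. A schedule is feasible if, for every node $i$ (including $S$), the participating children of $i$ have pairwise distinct waiting times, all strictly smaller than $W_i$. Let $n_i=1$ if node $i$ participates and $n_i=0$ otherwise, and let $H^\psi(i)$ be the set consisting of $i$ and all its ancestors in $\psi$ other than $S$. With $F_i=1$ if $i$ is a source node and $F_i=0$ otherwise, the quality of aggregation is $QoA=\sum_{i\in\mathcal{V}}F_i\prod_{j\in H^\psi(i)}n_j$, the number of source nodes whose whole path to the sink participates. The maximum $QoA$ of a tree $\psi$ is the maximum of $QoA$ over all feasible schedules on $\psi$. "Optimal tree" and "worst-case tree" refer to the aggregation trees with the largest and smallest maximum $QoA$, respectively (the worst case being a chain rooted at the sink). *)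

theory Defs
  imports Main
begin

definition agg_tree :: "'a set \<Rightarrow> 'a \<Rightarrow> ('a \<Rightarrow> 'a) \<Rightarrow> bool" where
  "agg_tree V s p \<longleftrightarrow> finite V \<and> s \<notin> V \<and>
     (\<forall>i\<in>V. p i \<in> insert s V \<and> (\<exists>k. (p ^^ k) i = s))"

definition anc :: "'a \<Rightarrow> ('a \<Rightarrow> 'a) \<Rightarrow> 'a \<Rightarrow> 'a set" where
  "anc s p i = {(p ^^ k) i | k. \<forall>m\<le>k. (p ^^ m) i \<noteq> s}"

definition wait :: "'a \<Rightarrow> nat \<Rightarrow> ('a \<Rightarrow> nat) \<Rightarrow> 'a \<Rightarrow> nat" where
  "wait s D W j = (if j = s then D else W j)"

text \<open>Feasible schedule: participation indicator n (n i = True iff n_i = 1) and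
  waiting times W.\<close>
definition feasible :: "'a set \<Rightarrow> 'a \<Rightarrow> ('a \<Rightarrow> 'a) \<Rightarrow> nat \<Rightarrow> ('a \<Rightarrow> bool) \<Rightarrow> ('a \<Rightarrow> nat) \<Rightarrow> bool" where
  "feasible V s p D n W \<longleftrightarrow>
     (\<forall>i\<in>V. n i \<longrightarrow> W i < D) \<and>
     (\<forall>j\<in>insert s {i\<in>V. n i}.
        inj_on W {i\<in>V. n i \<and> p i = j} \<and>
        (\<forall>i\<in>V. n i \<and> p i = j \<longrightarrow> W i < wait s D W j))"

text \<open>QoA when all sensor nodes are sources (F_i = 1 for all i).\<close>
definition qoa :: "'a set \<Rightarrow> 'a \<Rightarrow> ('a \<Rightarrow> 'a) \<Rightarrow> ('a \<Rightarrow> bool) \<Rightarrow> nat" where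
  "qoa V s p n = card {i\<in>V. \<forall>j\<in>anc s p i. n j}"

definition max_qoa :: "'a set \<Rightarrow> 'a \<Rightarrow> ('a \<Rightarrow> 'a) \<Rightarrow> nat \<Rightarrow> nat" where
  "max_qoa V s p D = Max {qoa V s p n | n W. feasible V s p D n W}"

definition chain_tree :: "'a set \<Rightarrow> 'a \<Rightarrow> ('a \<Rightarrow> 'a) \<Rightarrow> bool" where
  "chain_tree V s p \<longleftrightarrow> s \<notin> V \<and> (\<exists>xs. distinct xs \<and> set xs = V \<and> xs \<noteq> [] \<and>
      p (xs ! 0) = s \<and> (\<forall>k. Suc k < length xs \<longrightarrow> p (xs ! Suc k) = xs ! k))"

end

theory Submission
  imports Defs "HOL-Library.Discrete_Functions"
begin

text \<open>Along the path from a delivered source to the sink the waiting times strictly increase,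
  and siblings have different waiting times. Hence a delivered node is determined by the set of
  waiting times on its path, a nonempty subset of {0, ..., D - 1}, which gives QoA \<le> 2^D - 1;
  on a chain all delivered nodes lie on one path, so their waiting times alone separate them and
  QoA \<le> D. The binomial tree on 1, ..., 2^D - 1 (parent: clear the leading bit) attains 2^D - 1,
  and every tree with at least D sensor nodes contains D nodes closed under taking parents, which
  can be scheduled in D distinct slots, so QoA \<ge> D.\<close>

lemma all_le_Suc_iff: "(\<forall>m\<le>Suc k. P m) \<longleftrightarrow> P 0 \<and> (\<forall>m\<le>k. P (Suc m))"
  by (metis Suc_le_mono le0 not0_implies_Suc)

lemma anc_sink [simp]: "anc s p s = {}"
  by (auto simp: anc_def)

lemma anc_step:
  assumes "i \<noteq> s"
  shows "anc s p i = insert i (anc s p (p i))"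
proof
  show "anc s p i \<subseteq> insert i (anc s p (p i))"
  proof
    fix x assume "x \<in> anc s p i"
    then obtain k where x: "x = (p ^^ k) i" and k: "\<forall>m\<le>k. (p ^^ m) i \<noteq> s"
      unfolding anc_def by blast
    show "x \<in> insert i (anc s p (p i))"
    proof (cases k)
      case (Suc k')
      then have "x = (p ^^ k') (p i)" "\<forall>m\<le>k'. (p ^^ m) (p i) \<noteq> s"
        using x k by (simp_all add: all_le_Suc_iff funpow_Suc_right del: funpow.simps)
      then show ?thesis
        unfolding anc_def by blast
    qed (use x in simp)
  qed
  have "i \<in> anc s p i"
    using assms unfolding anc_def by (intro CollectI exI[of _ 0]) simp
  moreover have "(p ^^ k) (p i) \<in> anc s p i" if "\<forall>m\<le>k. (p ^^ m) (p i) \<noteq> s" for k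
    using that assms unfolding anc_def
    by (intro CollectI exI[of _ "Suc k"]) (simp add: all_le_Suc_iff funpow_Suc_right del: funpow.simps)
  ultimately show "insert i (anc s p (p i)) \<subseteq> anc s p i"
    unfolding anc_def[of s p "p i"] by blast
qed

lemma self_in_anc: "i \<noteq> s \<Longrightarrow> i \<in> anc s p i"
  by (simp add: anc_step)

lemma anc_empty_iff: "anc s p i = {} \<longleftrightarrow> i = s"
  using self_in_anc[of i s p] by auto

definition parent_closed :: "'a \<Rightarrow> ('a \<Rightarrow> 'a) \<Rightarrow> 'a set \<Rightarrow> bool" where
  "parent_closed s p U \<longleftrightarrow> (\<forall>u\<in>U. p u \<in> insert s U)"

lemma parent_closed_funpow:
  assumes "parent_closed s p U" "u \<in> U" "\<forall>m\<le>k. (p ^^ m) u \<noteq> s"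
  shows "(p ^^ k) u \<in> U"
  using assms(3)
proof (induction k)
  case (Suc k)
  then have "(p ^^ k) u \<in> U" "p ((p ^^ k) u) \<noteq> s"
    by auto
  then show ?case using assms(1) unfolding parent_closed_def by auto
qed (use assms(2) in simp)

lemma parent_closed_anc_subset:
  assumes "parent_closed s p U" "u \<in> U"
  shows "anc s p u \<subseteq> U"
  using parent_closed_funpow[OF assms] unfolding anc_def by blast

lemma agg_tree_parent_closed: "agg_tree V s p \<Longrightarrow> parent_closed s p V"
  by (simp add: agg_tree_def parent_closed_def)

lemma agg_tree_induct [consumes 2, case_names step]:
  assumes "agg_tree V s p" "i \<in> V"
    and step: "\<And>i. i \<in> V \<Longrightarrow> (p i \<in> V \<Longrightarrow> P (p i)) \<Longrightarrow> P i"
  shows "P i"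
proof -
  obtain k where "(p ^^ k) i = s"
    using assms(1,2) unfolding agg_tree_def by blast
  then show ?thesis
    using \<open>i \<in> V\<close>
  proof (induction k arbitrary: i)
    case 0
    then show ?case using assms(1) by (simp add: agg_tree_def)
  next
    case (Suc k)
    show ?case
    proof (rule step)
      show "i \<in> V"
        by fact
      assume "p i \<in> V"
      moreover have "(p ^^ k) (p i) = s"
        using Suc.prems(1) by (simp add: funpow_Suc_right del: funpow.simps)
      ultimately show "P (p i)"
        using Suc.IH by blast
    qed
  qed
qed

definition delivered :: "'a set \<Rightarrow> 'a \<Rightarrow> ('a \<Rightarrow> 'a) \<Rightarrow> ('a \<Rightarrow> bool) \<Rightarrow> 'a set" where
  "delivered V s p n = {i\<in>V. \<forall>j\<in>anc s p i. n j}"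

lemma qoa_eq_card_delivered: "qoa V s p n = card (delivered V s p n)"
  by (simp add: qoa_def delivered_def)

lemma qoa_values_finite:
  assumes "finite V"
  shows "finite {qoa V s p n | n W. feasible V s p D n W}"
proof -
  have "qoa V s p n \<le> card V" for n
    using assms unfolding qoa_def by (intro card_mono) auto
  then have "{qoa V s p n | n W. feasible V s p D n W} \<subseteq> {..card V}"
    by auto
  then show ?thesis
    by (rule finite_subset) simp
qed

lemma max_qoa_le:
  assumes "finite V" "\<And>n W. feasible V s p D n W \<Longrightarrow> qoa V s p n \<le> b"
  shows "max_qoa V s p D \<le> b"
proof -
  have "feasible V s p D (\<lambda>_. False) (\<lambda>_. 0)"
    by (simp add: feasible_def)
  then have nonempty: "{qoa V s p n | n W. feasible V s p D n W} \<noteq> {}"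
    by blast
  have bounded: "q \<le> b" if "q \<in> {qoa V s p n | n W. feasible V s p D n W}" for q
  proof -
    from that obtain n W where "q = qoa V s p n" "feasible V s p D n W"
      by blast
    then show ?thesis
      using assms(2) by simp
  qed
  show ?thesis
    unfolding max_qoa_def by (rule Max.boundedI[OF qoa_values_finite[OF assms(1)] nonempty bounded])
qed

lemma qoa_le_max_qoa:
  assumes "finite V" "feasible V s p D n W"
  shows "qoa V s p n \<le> max_qoa V s p D"
proof -
  have "qoa V s p n \<in> {qoa V s p n | n W. feasible V s p D n W}"
    using assms(2) by blast
  then show ?thesis
    unfolding max_qoa_def by (rule Max_ge[OF qoa_values_finite[OF assms(1)]])
qed

locale feasible_schedule =
  fixes V :: "'a set" and s :: 'a and p :: "'a \<Rightarrow> 'a" and D :: nat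
    and n :: "'a \<Rightarrow> bool" and W :: "'a \<Rightarrow> nat"
  assumes tree: "agg_tree V s p"
    and feasible: "feasible V s p D n W"
begin

abbreviation "R \<equiv> delivered V s p n"

lemma sink_notin: "s \<notin> V"
  using tree by (simp add: agg_tree_def)

lemma wait_less_deadline:
  assumes "i \<in> V" "n i"
  shows "W i < D"
proof -
  have "\<forall>i\<in>V. n i \<longrightarrow> W i < D"
    using feasible unfolding feasible_def by (rule conjunct1)
  then show ?thesis
    using assms by blast
qed

lemma feasible_at:
  assumes "j \<in> insert s {i\<in>V. n i}"
  shows "inj_on W {i\<in>V. n i \<and> p i = j}" "\<And>i. i \<in> V \<Longrightarrow> n i \<Longrightarrow> p i = j \<Longrightarrow> W i < wait s D W j"
proof -
  have "\<forall>j\<in>insert s {i\<in>V. n i}. inj_on W {i\<in>V. n i \<and> p i = j} \<and>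
      (\<forall>i\<in>V. n i \<and> p i = j \<longrightarrow> W i < wait s D W j)"
    using feasible unfolding feasible_def by (rule conjunct2)
  then have "inj_on W {i\<in>V. n i \<and> p i = j} \<and> (\<forall>i\<in>V. n i \<and> p i = j \<longrightarrow> W i < wait s D W j)"
    using assms by (rule bspec)
  then show "inj_on W {i\<in>V. n i \<and> p i = j}" "\<And>i. i \<in> V \<Longrightarrow> n i \<Longrightarrow> p i = j \<Longrightarrow> W i < wait s D W j"
    by simp_all
qed

lemma delivered_in: "i \<in> R \<Longrightarrow> i \<in> V"
  by (simp add: delivered_def)

lemma anc_delivered_step:
  assumes "i \<in> R"
  shows "anc s p i = insert i (anc s p (p i))"
proof (rule anc_step)
  show "i \<noteq> s"
    using delivered_in[OF assms] sink_notin by blast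
qed

lemma delivered_participates:
  assumes "i \<in> R"
  shows "n i"
proof -
  have "i \<in> anc s p i"
    using anc_delivered_step[OF assms] by simp
  then show ?thesis
    using assms unfolding delivered_def by blast
qed

lemma delivered_parent:
  assumes "i \<in> R" "p i \<noteq> s"
  shows "p i \<in> R" "W i < W (p i)"
proof -
  have "p i \<in> insert s V"
    using tree delivered_in[OF assms(1)] unfolding agg_tree_def by blast
  then have "p i \<in> V"
    using assms(2) by simp
  moreover have "anc s p (p i) \<subseteq> anc s p i"
    unfolding anc_delivered_step[OF assms(1)] by (rule subset_insertI)
  ultimately show "p i \<in> R"
    using assms(1) unfolding delivered_def by blast
  then have "p i \<in> insert s {j\<in>V. n j}"
    using delivered_in delivered_participates by blast
  then have "W i < wait s D W (p i)"
    using feasible_at(2) delivered_in delivered_participates assms(1) by blast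
  then show "W i < W (p i)"
    using assms(2) by (simp add: wait_def)
qed

lemma parent_of_delivered: "i \<in> R \<Longrightarrow> p i \<in> insert s {j\<in>V. n j}"
  using delivered_parent(1) delivered_in delivered_participates by blast

lemma delivered_siblings_eq:
  assumes "i \<in> R" "i' \<in> R" "p i = p i'" "W i = W i'"
  shows "i = i'"
proof (rule inj_onD[OF feasible_at(1)[OF parent_of_delivered[OF assms(1)]] assms(4)])
  show "i \<in> {j\<in>V. n j \<and> p j = p i}" "i' \<in> {j\<in>V. n j \<and> p j = p i}"
    using assms(1-3) delivered_in delivered_participates by simp_all
qed

lemma delivered_wait_le_anc:
  assumes "i \<in> R" "j \<in> anc s p i"
  shows "W i \<le> W j"
  using tree delivered_in[OF assms(1)] assms
proof (induction i rule: agg_tree_induct)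
  case (step i)
  show ?case
  proof (cases "j = i")
    case False
    then have j: "j \<in> anc s p (p i)"
      using step.prems(2) anc_delivered_step[OF step.prems(1)] by simp
    then have "p i \<noteq> s"
      by auto
    then have "p i \<in> R" "W i < W (p i)"
      using delivered_parent[OF step.prems(1)] by simp_all
    moreover have "W (p i) \<le> W j"
      using step.IH delivered_in calculation(1) j by blast
    ultimately show ?thesis
      by simp
  qed simp
qed

lemma wait_less_anc_parent:
  assumes "i \<in> R" "j \<in> anc s p (p i)"
  shows "W i < W j"
proof -
  have "p i \<noteq> s"
    using assms(2) by auto
  then show ?thesis
    using delivered_parent[OF assms(1)] delivered_wait_le_anc assms(2) by (meson order.strict_trans2)
qed

lemma wait_image_anc_parent:
  assumes "i \<in> R"
  shows "W ` anc s p (p i) = W ` anc s p i - {W i}"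
proof -
  have "W i \<notin> W ` anc s p (p i)"
    using wait_less_anc_parent[OF assms] by (metis imageE less_irrefl)
  then show ?thesis
    unfolding anc_delivered_step[OF assms] by simp
qed

text \<open>The smallest waiting time on the path is the node's own, and removing it leaves the
  waiting times on the parent's path; so the set of waiting times determines the path.\<close>
lemma wait_image_anc_inj: "inj_on (\<lambda>i. W ` anc s p i) R"
proof -
  have "i = i'" if "i \<in> R" "i' \<in> R" "W ` anc s p i = W ` anc s p i'" for i i'
    using tree delivered_in[OF that(1)] that
  proof (induction i arbitrary: i' rule: agg_tree_induct)
    case (step i)
    have "i \<in> anc s p i" "i' \<in> anc s p i'"
      using anc_delivered_step[OF step.prems(1)] anc_delivered_step[OF step.prems(2)] by simp_all
    then have "W i' \<in> W ` anc s p i" "W i \<in> W ` anc s p i'"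
      using step.prems(3) by (metis imageI)+
    then obtain j j' where j: "j \<in> anc s p i" "W i' = W j" and j': "j' \<in> anc s p i'" "W i = W j'"
      by blast
    have "W i \<le> W i'" "W i' \<le> W i"
      using delivered_wait_le_anc[OF step.prems(1) j(1)] delivered_wait_le_anc[OF step.prems(2) j'(1)]
        j(2) j'(2) by simp_all
    then have same_wait: "W i = W i'"
      by simp
    then have same_parent_image: "W ` anc s p (p i) = W ` anc s p (p i')"
      using wait_image_anc_parent[OF step.prems(1)] wait_image_anc_parent[OF step.prems(2)]
        step.prems(3) by simp
    have "p i = p i'"
    proof (cases "p i = s")
      case True
      then show ?thesis
        using same_parent_image by (simp add: anc_empty_iff)
    next
      case False
      have "p i' \<noteq> s"
      proof
        assume "p i' = s"
        then show False
          using same_parent_image False by (simp add: anc_empty_iff)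
      qed
      have "p i \<in> R" "p i' \<in> R"
        using delivered_parent(1) step.prems(1,2) False \<open>p i' \<noteq> s\<close> by simp_all
      show ?thesis
        by (rule step.IH) (use \<open>p i \<in> R\<close> \<open>p i' \<in> R\<close> same_parent_image delivered_in in auto)
    qed
    then show ?case
      by (rule delivered_siblings_eq[OF step.prems(1,2) _ same_wait])
  qed
  then show ?thesis
    by (intro inj_onI)
qed

lemma card_delivered_le: "card R \<le> 2 ^ D - 1"
proof -
  have "W ` anc s p i \<in> Pow {..<D} - {{}}" if "i \<in> R" for i
  proof -
    have "anc s p i \<subseteq> V"
      using parent_closed_anc_subset[OF agg_tree_parent_closed[OF tree] delivered_in[OF that]] .
    moreover have "\<forall>j\<in>anc s p i. n j"
      using that unfolding delivered_def by blast
    ultimately have "W ` anc s p i \<subseteq> {..<D}"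
      using wait_less_deadline by blast
    moreover have "i \<in> anc s p i"
      using anc_delivered_step[OF that] by simp
    ultimately show ?thesis
      by blast
  qed
  then have "(\<lambda>i. W ` anc s p i) ` R \<subseteq> Pow {..<D} - {{}}"
    by blast
  then have "card R \<le> card (Pow {..<D} - {{}})"
    by (rule card_inj_on_le[OF wait_image_anc_inj]) simp
  also have "\<dots> = 2 ^ D - 1"
    by (simp add: card_Pow)
  finally show ?thesis .
qed

lemma card_delivered_le_path:
  assumes "\<And>i j. i \<in> V \<Longrightarrow> j \<in> V \<Longrightarrow> i \<in> anc s p j \<or> j \<in> anc s p i"
  shows "card R \<le> D"
proof -
  have "inj_on W R"
  proof (rule inj_onI, rule ccontr)
    fix i j assume ij: "i \<in> R" "j \<in> R" "W i = W j" "i \<noteq> j"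
    then have "i \<in> anc s p j \<or> j \<in> anc s p i"
      using assms delivered_in by blast
    then have "j \<in> anc s p (p i) \<or> i \<in> anc s p (p j)"
      using anc_delivered_step[OF ij(1)] anc_delivered_step[OF ij(2)] ij(4) by auto
    then show False
      using ij wait_less_anc_parent[of i j] wait_less_anc_parent[of j i] by auto
  qed
  moreover have "W ` R \<subseteq> {..<D}"
    using wait_less_deadline delivered_in delivered_participates by blast
  ultimately show ?thesis
    using card_inj_on_le[of W R "{..<D}"] by simp
qed

end

lemma max_qoa_le_pow:
  assumes "agg_tree V s p"
  shows "max_qoa V s p D \<le> 2 ^ D - 1"
proof (rule max_qoa_le)
  show "finite V"
    using assms by (simp add: agg_tree_def)
  show "qoa V s p n \<le> 2 ^ D - 1" if "feasible V s p D n W" for n W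
    using feasible_schedule.card_delivered_le[of V s p D n W] assms that
    unfolding feasible_schedule_def qoa_eq_card_delivered by blast
qed

lemma exists_outside_with_parent_inside:
  assumes "agg_tree V s p" "u \<in> V" "u \<notin> U"
  shows "\<exists>v\<in>V - U. p v \<in> insert s U"
  using assms
proof (induction u rule: agg_tree_induct)
  case (step u)
  show ?case
  proof (cases "p u \<in> insert s U")
    case False
    then have "p u \<in> V"
      using assms(1) step.hyps by (auto simp: agg_tree_def)
    then show ?thesis
      using step.IH False by blast
  qed (use step.hyps step.prems in blast)
qed

lemma exists_parent_closed_schedule:
  assumes "agg_tree V s p" "d \<le> card V"
  shows "\<exists>U W. U \<subseteq> V \<and> card U = d \<and> parent_closed s p U \<and> inj_on W U \<and> W ` U \<subseteq> {..<d} \<and>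
           (\<forall>u\<in>U. p u \<noteq> s \<longrightarrow> W u < W (p u))"
  using assms(2)
proof (induction d)
  case 0
  show ?case
    by (intro exI[of _ "{}"]) (simp add: parent_closed_def)
next
  case (Suc d)
  then obtain U W where U: "U \<subseteq> V" "card U = d" "parent_closed s p U" "inj_on W U"
      "W ` U \<subseteq> {..<d}" "\<forall>u\<in>U. p u \<noteq> s \<longrightarrow> W u < W (p u)"
    by auto
  have "finite U"
    using assms(1) U(1) finite_subset by (auto simp: agg_tree_def)
  have "\<not> V \<subseteq> U"
  proof
    assume "V \<subseteq> U"
    then have "card V \<le> card U"
      using card_mono[OF \<open>finite U\<close>] by blast
    then show False
      using U(2) Suc.prems by simp
  qed
  then obtain u where "u \<in> V" "u \<notin> U"
    by blast
  then obtain v where v: "v \<in> V" "v \<notin> U" "p v \<in> insert s U"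
    using exists_outside_with_parent_inside[OF assms(1)] by blast
  text \<open>The new node is a leaf of the enlarged set: it transmits first and every other
    node is delayed by one slot.\<close>
  define W' where "W' x = (if x = v then 0 else Suc (W x))" for x
  show ?case
  proof (intro exI[of _ "insert v U"] exI[of _ W'] conjI)
    show "insert v U \<subseteq> V" "card (insert v U) = Suc d"
      using U(1,2) v(1,2) \<open>finite U\<close> by auto
    show "parent_closed s p (insert v U)"
      using U(3) v(3) by (auto simp: parent_closed_def)
    show "inj_on W' (insert v U)"
      using U(4) v(2) by (auto simp: W'_def inj_on_def)
    show "W' ` insert v U \<subseteq> {..<Suc d}"
      using U(5) by (auto simp: W'_def)
    show "\<forall>u\<in>insert v U. p u \<noteq> s \<longrightarrow> W' u < W' (p u)"
      using U(3,6) v(2,3) by (auto simp: W'_def parent_closed_def)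
  qed
qed

lemma max_qoa_ge_deadline:
  assumes "agg_tree V s p" "D \<le> card V"
  shows "D \<le> max_qoa V s p D"
proof -
  obtain U W where U: "U \<subseteq> V" "card U = D" "parent_closed s p U" "inj_on W U"
      "W ` U \<subseteq> {..<D}" "\<forall>u\<in>U. p u \<noteq> s \<longrightarrow> W u < W (p u)"
    using exists_parent_closed_schedule[OF assms] by blast
  have "inj_on W {i\<in>V. i \<in> U \<and> p i = j}" for j
    using U(4) by (rule inj_on_subset) blast
  then have "feasible V s p D (\<lambda>x. x \<in> U) W"
    unfolding feasible_def wait_def using U(5,6) by auto
  moreover have "delivered V s p (\<lambda>x. x \<in> U) = U"
  proof -
    have "i \<in> anc s p i" if "i \<in> V" for i
      using self_in_anc assms(1) that by (metis agg_tree_def)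
    then show ?thesis
      using U(1) parent_closed_anc_subset[OF U(3)] by (auto simp: delivered_def)
  qed
  ultimately show ?thesis
    using qoa_le_max_qoa[of V s p D "\<lambda>x. x \<in> U" W] assms(1) U(2)
    by (simp add: qoa_eq_card_delivered agg_tree_def)
qed

definition clear_top_bit :: "nat \<Rightarrow> nat" where
  "clear_top_bit m = m - 2 ^ floor_log m"

lemma clear_top_bit_less_pow: "0 < m \<Longrightarrow> clear_top_bit m < 2 ^ floor_log m"
  using floor_log_exp2_gt[of m] floor_log_exp2_le[of m] unfolding clear_top_bit_def by linarith

lemma clear_top_bit_add: "0 < m \<Longrightarrow> clear_top_bit m + 2 ^ floor_log m = m"
  using floor_log_exp2_le[of m] unfolding clear_top_bit_def by simp

lemma clear_top_bit_less: "0 < m \<Longrightarrow> clear_top_bit m < m"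
  using floor_log_exp2_le[of m] unfolding clear_top_bit_def by simp

lemma floor_log_clear_top_bit:
  assumes "0 < clear_top_bit m"
  shows "floor_log (clear_top_bit m) < floor_log m"
proof -
  have "0 < m"
    using assms by (simp add: clear_top_bit_def)
  have "(2::nat) ^ floor_log (clear_top_bit m) \<le> clear_top_bit m"
    using floor_log_exp2_le[OF assms] .
  also have "\<dots> < 2 ^ floor_log m"
    using clear_top_bit_less_pow[OF \<open>0 < m\<close>] .
  finally show ?thesis
    by simp
qed

lemma floor_log_less:
  assumes "0 < m" "m < 2 ^ D"
  shows "floor_log m < D"
proof -
  have "(2::nat) ^ floor_log m < 2 ^ D"
    using floor_log_exp2_le[OF assms(1)] assms(2) by linarith
  then show ?thesis
    by (rule power_less_imp_less_exp[rotated]) simp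
qed

lemma clear_top_bit_reaches_zero: "\<exists>k. (clear_top_bit ^^ k) m = 0"
proof (induction m rule: less_induct)
  case (less m)
  show ?case
  proof (cases "m = 0")
    case False
    then obtain k where "(clear_top_bit ^^ k) (clear_top_bit m) = 0"
      using less clear_top_bit_less by blast
    then have "(clear_top_bit ^^ Suc k) m = 0"
      by (simp add: funpow_Suc_right del: funpow.simps)
    then show ?thesis ..
  qed (use funpow_0 in metis)
qed

text \<open>The binomial tree: node m of 1, ..., 2^D - 1 hangs below m with its leading bit cleared,
  and waits D - 1 - floor_log m slots, so that children (which have a higher leading bit than
  their parent) transmit earlier, and siblings (which differ in their leading bit) at
  different times.\<close>
lemma binomial_tree: "agg_tree {1..<2 ^ D} 0 clear_top_bit"
proof -
  have "clear_top_bit i \<in> insert 0 {1..<2 ^ D}" if "i \<in> {1..<2 ^ D}" for i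
    using clear_top_bit_less[of i] that by auto
  then show ?thesis
    unfolding agg_tree_def using clear_top_bit_reaches_zero by simp
qed

lemma binomial_tree_feasible:
  "feasible {1..<2 ^ D} 0 clear_top_bit D (\<lambda>_. True) (\<lambda>m. D - Suc (floor_log m))"
proof -
  let ?V = "{1..<(2::nat) ^ D}" and ?W = "\<lambda>m. D - Suc (floor_log m)"
  have fl: "floor_log m < D" if "m \<in> ?V" for m
    using floor_log_less that by simp
  have siblings: "inj_on ?W {i\<in>?V. clear_top_bit i = j}" for j
  proof (rule inj_onI)
    fix x y
    assume "x \<in> {i\<in>?V. clear_top_bit i = j}" "y \<in> {i\<in>?V. clear_top_bit i = j}"
      and same_wait: "?W x = ?W y"
    then have "floor_log x < D" "floor_log y < D" "clear_top_bit x = clear_top_bit y" "0 < x" "0 < y"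
      using fl by auto
    moreover from this(1,2) same_wait have "floor_log x = floor_log y"
      by arith
    ultimately show "x = y"
      using clear_top_bit_add[of x] clear_top_bit_add[of y] by metis
  qed
  have earlier: "?W i < ?W (clear_top_bit i)" if "i \<in> ?V" "0 < clear_top_bit i" for i
    using floor_log_clear_top_bit[OF that(2)] fl[OF that(1)] by simp
  have deadline: "?W i < D" if "i \<in> ?V" for i
    using fl[OF that] by simp
  show ?thesis
    unfolding feasible_def wait_def using deadline siblings earlier by auto
qed

lemma max_qoa_binomial_tree: "max_qoa {1..<2 ^ D} 0 clear_top_bit D = 2 ^ D - 1"
proof (rule antisym)
  show "max_qoa {1..<2 ^ D} 0 clear_top_bit D \<le> 2 ^ D - 1"
    using max_qoa_le_pow[OF binomial_tree] .
  have "{i\<in>{1..<2 ^ D}. \<forall>j\<in>anc 0 clear_top_bit i. True} = {1..<(2::nat) ^ D}"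
    by blast
  then have "qoa {1..<2 ^ D} 0 clear_top_bit (\<lambda>_. True) = 2 ^ D - 1"
    unfolding qoa_def by simp
  then show "2 ^ D - 1 \<le> max_qoa {1..<2 ^ D} 0 clear_top_bit D"
    using qoa_le_max_qoa[OF finite_atLeastLessThan binomial_tree_feasible[of D]] by simp
qed

lemma chain_anc:
  assumes "s \<notin> set xs" "p (xs ! 0) = s" "\<forall>k. Suc k < length xs \<longrightarrow> p (xs ! Suc k) = xs ! k"
    and "b < length xs"
  shows "anc s p (xs ! b) = set (take (Suc b) xs)"
  using assms(4)
proof (induction b)
  case 0
  then have "xs ! 0 \<noteq> s"
    using assms(1) nth_mem by metis
  then show ?case
    using 0 assms(2) anc_step[of "xs ! 0" s p] by (simp add: take_Suc_conv_app_nth)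
next
  case (Suc b)
  then have "xs ! Suc b \<noteq> s"
    using assms(1) nth_mem by metis
  then show ?case
    using Suc assms(3) anc_step[of "xs ! Suc b" s p] by (simp add: take_Suc_conv_app_nth insert_commute)
qed

lemma chain_tree_reaches_sink:
  assumes "p (xs ! 0) = s" "\<forall>k. Suc k < length xs \<longrightarrow> p (xs ! Suc k) = xs ! k" "a < length xs"
  shows "(p ^^ Suc a) (xs ! a) = s"
  using assms(3)
proof (induction a)
  case (Suc a)
  then show ?case
    using assms(2) by (simp add: funpow_Suc_right del: funpow.simps)
qed (use assms(1) in simp)

lemma chain_tree_agg_tree:
  assumes "chain_tree V s p"
  shows "agg_tree V s p"
proof -
  obtain xs where xs: "s \<notin> V" "set xs = V" "p (xs ! 0) = s"
      "\<forall>k. Suc k < length xs \<longrightarrow> p (xs ! Suc k) = xs ! k"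
    using assms unfolding chain_tree_def by blast
  have "p i \<in> insert s V \<and> (\<exists>k. (p ^^ k) i = s)" if "i \<in> V" for i
  proof -
    have "i \<in> set xs"
      using that xs(2) by simp
    then obtain a where a: "a < length xs" "i = xs ! a"
      unfolding in_set_conv_nth by blast
    have "p i \<in> insert s V"
    proof (cases a)
      case 0
      then show ?thesis
        using a(2) xs(3) by simp
    next
      case (Suc b)
      then have "p i = xs ! b"
        using a xs(4) by simp
      moreover have "xs ! b \<in> set xs"
        using Suc a(1) by simp
      ultimately show ?thesis
        using xs(2) by simp
    qed
    then show ?thesis
      using chain_tree_reaches_sink[OF xs(3,4) a(1)] a(2) by blast
  qed
  moreover have "finite V"
    unfolding xs(2)[symmetric] by (rule finite_set)
  ultimately show ?thesis
    using xs(1) unfolding agg_tree_def by blast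
qed

lemma chain_tree_anc_comparable:
  assumes "chain_tree V s p" "i \<in> V" "j \<in> V"
  shows "i \<in> anc s p j \<or> j \<in> anc s p i"
proof -
  obtain xs where xs: "s \<notin> set xs" "set xs = V" "p (xs ! 0) = s"
      "\<forall>k. Suc k < length xs \<longrightarrow> p (xs ! Suc k) = xs ! k"
    using assms(1) unfolding chain_tree_def by blast
  have "i \<in> set xs" "j \<in> set xs"
    using assms(2,3) xs(2) by simp_all
  then obtain a b where ab: "a < length xs" "i = xs ! a" "b < length xs" "j = xs ! b"
    unfolding in_set_conv_nth by blast
  have "xs ! a \<in> set (take (Suc b) xs)" if "a \<le> b" "a < length xs" for a b
    using that nth_mem[of a "take (Suc b) xs"] by simp
  then have "xs ! a \<in> set (take (Suc b) xs) \<or> xs ! b \<in> set (take (Suc a) xs)"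
    using ab by (meson nat_le_linear)
  then show ?thesis
    using chain_anc[OF xs(1,3,4)] ab by simp
qed

lemma max_qoa_chain_le:
  assumes "chain_tree V s p"
  shows "max_qoa V s p D \<le> D"
  using assms chain_tree_agg_tree[OF assms] chain_tree_anc_comparable[OF assms]
    feasible_schedule.card_delivered_le_path[of V s p D]
  by (intro max_qoa_le) (auto simp: agg_tree_def feasible_schedule_def qoa_eq_card_delivered)

theorem theorem1:
  fixes D :: nat
  assumes "D \<ge> 1"
  shows "(\<forall>(V::nat set) s p. agg_tree V s p \<longrightarrow> max_qoa V s p D \<le> 2 ^ D - 1)
       \<and> (\<exists>(V::nat set) s p. agg_tree V s p \<and> max_qoa V s p D = 2 ^ D - 1)
       \<and> (\<forall>(V::nat set) s p. agg_tree V s p \<and> card V \<ge> D \<longrightarrow> max_qoa V s p D \<ge> D)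
       \<and> (\<forall>(V::nat set) s p. chain_tree V s p \<and> card V \<ge> D \<longrightarrow> max_qoa V s p D = D)"
proof (intro conjI allI impI)
  fix V :: "nat set" and s p
  assume "agg_tree V s p"
  then show "max_qoa V s p D \<le> 2 ^ D - 1"
    by (rule max_qoa_le_pow)
next
  show "\<exists>(V::nat set) s p. agg_tree V s p \<and> max_qoa V s p D = 2 ^ D - 1"
    using binomial_tree[of D] max_qoa_binomial_tree[of D] by blast
next
  fix V :: "nat set" and s p
  assume "agg_tree V s p \<and> card V \<ge> D"
  then show "max_qoa V s p D \<ge> D"
    using max_qoa_ge_deadline[of V s p D] by blast
next
  fix V :: "nat set" and s p
  assume chain: "chain_tree V s p \<and> card V \<ge> D"
  then have "D \<le> max_qoa V s p D"
    using max_qoa_ge_deadline[of V s p D] chain_tree_agg_tree[of V s p] by blast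
  then show "max_qoa V s p D = D"
    using max_qoa_chain_le[of V s p D] chain by simp
qed

end
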